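(* Let $\mathbb{F}$ be a field of characteristic $2$. The voltage assignment $\ell$ on $\widetilde H_3(\mathbb{F})$ is reductive, i.e. for all vertices $u,v,w$ of $\widetilde H_3(\mathbb{F})$ with $u\sim v$ and $v\perp w$ we have $\ell(w,u)=\ell(w,v)$.
   Context: Let $V=\mathbb{F}^4$, $V^*$ its dual. $\widetilde H_3(\mathbb{F})$ is the graph whose vertices are tensors $v\otimes f\in V\otimes V^*$ with $f(v)\neq0$, with $v\otimes f\perp w\otimes g$ iff $f(w)=g(v)=0$; $u\sim v$ means $u,v$ have the same neighbours. Let $W=\bigwedge^2V$, fix an isomorphism $\chi:\bigwedge^4V\to\mathbb{F}$, identify $\bigwedge^2V^*$ with $(\bigwedge^2V)^*$ via $(f_1\wedge f_2)(v_1\wedge v_2)=f_1(v_1)f_2(v_2)-f_1(v_2)f_2(v_1)$, let $\psi:\bigwedge^2V\to\bigwedge^2V^*$ be $\psi(\hat w)(\hat v)=\chi(\hat v\wedge\hat w)$ and $\phi=\psi^{-1}$. $S_2(W)$ is the symmetric square of $W$ (product $ab$). $\ell$ assigns to the dart from $v_1\otimes h_1$ to $v_2\otimes h_2$ the element $h_1(v_1)^{-1}h_2(v_2)^{-1}(v_1\wedge v_2)\,\phi(h_1\wedge h_2)$ of the additive group $S_2(W)$. *)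

theory Defs
  imports "HOL-Analysis.Analysis" "HOL-Library.Numeral_Type"
begin

text \<open>Coordinates: V = F^4 is 'a^4 with standard basis e_0..e_3, V* is 'a^4 with the
dual basis, so f(v) is the sum of the products of coordinates.\<close>

definition dapp :: "'a::field ^ 4 \<Rightarrow> 'a ^ 4 \<Rightarrow> 'a" where
  "dapp f v = (\<Sum>i\<in>UNIV. f $ i * v $ i)"

text \<open>Vertices of the graph: tensors v (x) f with f(v) nonzero, given by a representative (v,f).
Orthogonality (adjacency): f(w) = 0 and g(v) = 0.\<close>

definition is_vertex :: "('a::field ^ 4) \<times> ('a ^ 4) \<Rightarrow> bool" where
  "is_vertex x = (dapp (snd x) (fst x) \<noteq> 0)"

definition perp :: "('a::field ^ 4) \<times> ('a ^ 4) \<Rightarrow> ('a ^ 4) \<times> ('a ^ 4) \<Rightarrow> bool" where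
  "perp x y = (dapp (snd x) (fst y) = 0 \<and> dapp (snd y) (fst x) = 0)"

definition same_nbhd :: "('a::field ^ 4) \<times> ('a ^ 4) \<Rightarrow> ('a ^ 4) \<times> ('a ^ 4) \<Rightarrow> bool" where
  "same_nbhd x y = (\<forall>z. is_vertex z \<longrightarrow> (perp x z \<longleftrightarrow> perp y z))"

text \<open>W = wedge^2 V, in coordinates w.r.t. the basis e_i wedge e_j (i<j); an element is an
alternating function on index pairs (value at (i,j), i<j, is the coordinate).
The same coordinates describe wedge^2 V* w.r.t. the basis e^i wedge e^j, which under the
stated pairing is exactly the dual basis of the e_i wedge e_j.\<close>

definition alt2 :: "(4 \<times> 4 \<Rightarrow> 'a::field) \<Rightarrow> bool" where
  "alt2 a = (\<forall>i j. a (i, j) = - a (j, i) \<and> a (i, i) = 0)"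

definition wedge2 :: "'a::field ^ 4 \<Rightarrow> 'a ^ 4 \<Rightarrow> (4 \<times> 4 \<Rightarrow> 'a)" where
  "wedge2 v w = (\<lambda>(i, j). v $ i * w $ j - v $ j * w $ i)"

definition pair2 :: "(4 \<times> 4 \<Rightarrow> 'a::field) \<Rightarrow> (4 \<times> 4 \<Rightarrow> 'a) \<Rightarrow> 'a" where
  "pair2 \<alpha> a = (\<Sum>p\<in>{(i, j). i < j}. \<alpha> p * a p)"

definition basis4 :: "4 \<Rightarrow> 'a::field ^ 4" where
  "basis4 i = (\<chi> k. if k = i then 1 else 0)"

text \<open>Coefficient of e_0 wedge e_1 wedge e_2 wedge e_3 in a wedge b, for a, b in wedge^2 V.\<close>

definition wedge4 :: "(4 \<times> 4 \<Rightarrow> 'a::field) \<Rightarrow> (4 \<times> 4 \<Rightarrow> 'a) \<Rightarrow> 'a" where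
  "wedge4 a b =
     a (0,1) * b (2,3) - a (0,2) * b (1,3) + a (0,3) * b (1,2)
   + a (1,2) * b (0,3) - a (1,3) * b (0,2) + a (2,3) * b (0,1)"

text \<open>The isomorphism chi : wedge^4 V -> F is determined by the nonzero scalar
c = chi(e_0 wedge e_1 wedge e_2 wedge e_3); psi(w)(v) = chi(v wedge w), written in the
coordinates of wedge^2 V* (dual basis), and phi is the inverse of psi.\<close>

definition psi :: "'a::field \<Rightarrow> (4 \<times> 4 \<Rightarrow> 'a) \<Rightarrow> (4 \<times> 4 \<Rightarrow> 'a)" where
  "psi c w = (\<lambda>(i, j). c * wedge4 (wedge2 (basis4 i) (basis4 j)) w)"

definition phi :: "'a::field \<Rightarrow> (4 \<times> 4 \<Rightarrow> 'a) \<Rightarrow> (4 \<times> 4 \<Rightarrow> 'a)" where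
  "phi c \<alpha> = (THE w. alt2 w \<and> psi c w = \<alpha>)"

text \<open>S_2(W): an element is given by its coordinates w.r.t. the basis {b_p b_q} (p <= q) of
monomials in the basis b_p = e_i wedge e_j of W; we store the coefficient of b_p b_q
symmetrically at (p,q) and (q,p), and 0 off the index set.  This is valid in every
characteristic (in particular characteristic 2).\<close>

definition idx2 :: "(4 \<times> 4) set" where
  "idx2 = {(i, j). i < j}"

definition sprod :: "(4 \<times> 4 \<Rightarrow> 'a::field) \<Rightarrow> (4 \<times> 4 \<Rightarrow> 'a) \<Rightarrow> (4 \<times> 4) \<times> (4 \<times> 4) \<Rightarrow> 'a" where
  "sprod a b = (\<lambda>(p, q). if p \<in> idx2 \<and> q \<in> idx2 then
                   (if p = q then a p * b p else a p * b q + a q * b p) else 0)"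

definition voltage :: "'a::field \<Rightarrow> ('a ^ 4) \<times> ('a ^ 4) \<Rightarrow> ('a ^ 4) \<times> ('a ^ 4)
                        \<Rightarrow> (4 \<times> 4) \<times> (4 \<times> 4) \<Rightarrow> 'a" where
  "voltage c x y = (\<lambda>r. inverse (dapp (snd x) (fst x)) * inverse (dapp (snd y) (fst y)) *
      sprod (wedge2 (fst x) (fst y)) (phi c (wedge2 (snd x) (snd y))) r)"

end

theory Submission
  imports Defs
begin

text \<open>Two vertices with the same neighbourhood are rescalings of one another: the kernel of
one functional lies in the kernel of the other, so the functionals are proportional, and dually
so are the vectors.  The voltage of a dart is invariant under rescaling the vector and the
functional of its target by nonzero scalars a and b: the wedge products pick up the factors
a and b, which the normalising factor 1/f(v) of the target v \<otimes> f cancels.\<close>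

lemma dapp_commute: "dapp f v = dapp v f"
  by (simp add: dapp_def mult.commute)

lemma dapp_diff_right: "dapp f (x - y) = dapp f x - dapp f y"
  by (simp add: dapp_def algebra_simps sum_subtractf)

lemma dapp_scale_right: "dapp f (a *s x) = a * dapp f x"
  by (simp add: dapp_def sum_distrib_left algebra_simps)

lemma dapp_scale_left: "dapp (a *s f) x = a * dapp f x"
  by (simp add: dapp_def sum_distrib_left algebra_simps)

lemma dapp_zero_right [simp]: "dapp f 0 = 0"
  by (simp add: dapp_def)

lemma dapp_basis4: "dapp f (basis4 i) = f $ i"
  by (simp add: dapp_def basis4_def if_distrib cong: if_cong)

lemma exists_dapp_separating:
  fixes f v w :: "'a::field ^ 4"
  assumes "dapp f v \<noteq> 0" and "w \<noteq> 0" and "dapp f w = 0"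
  shows "\<exists>g. dapp g v = 0 \<and> dapp g w \<noteq> 0"
proof -
  \<comment> \<open>w is no multiple of v, so some 2 \<times> 2 minor of (v, w) is nonzero; the functional
    x \<mapsto> v$i * x$j - v$j * x$i of that minor separates v from w.\<close>
  have "\<exists>i j. v$i * w$j - v$j * w$i \<noteq> 0"
  proof (rule ccontr)
    assume "\<not> ?thesis"
    then have minors: "v$i * w$j = v$j * w$i" for i j
      by auto
    have "dapp f v * w$i = dapp f w * v$i" for i
    proof -
      have "dapp f v * w$i = (\<Sum>k\<in>UNIV. f$k * (v$k * w$i))"
        unfolding dapp_def by (simp add: sum_distrib_right mult.assoc)
      also have "\<dots> = (\<Sum>k\<in>UNIV. f$k * (w$k * v$i))"
        using minors by (metis mult.commute)
      also have "\<dots> = dapp f w * v$i"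
        unfolding dapp_def by (simp add: sum_distrib_right mult.assoc)
      finally show ?thesis .
    qed
    then have "w = 0"
      using assms(1,3) by (simp add: vec_eq_iff)
    then show False
      using assms(2) by simp
  qed
  then obtain i j where minor: "v$i * w$j - v$j * w$i \<noteq> 0"
    by blast
  then have "i \<noteq> j"
    by auto
  define g where "g = (\<chi> k. if k = j then v$i else if k = i then - v$j else 0)"
  have dapp_g: "dapp g x = v$i * x$j - v$j * x$i" for x
  proof -
    have "dapp g x = (\<Sum>k\<in>UNIV. (if k = j then v$i * x$k else 0) + (if k = i then - v$j * x$k else 0))"
      unfolding dapp_def g_def using \<open>i \<noteq> j\<close> by (intro sum.cong) auto
    then show ?thesis
      by (simp add: sum.distrib)
  qed
  show ?thesis
    using minor by (intro exI[of _ g]) (simp add: dapp_g mult.commute)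
qed

lemma kernel_subset_imp_proportional:
  fixes f1 v1 f2 :: "'a::field ^ 4"
  assumes "dapp f1 v1 \<noteq> 0" and "\<And>x. dapp f1 x = 0 \<Longrightarrow> dapp f2 x = 0"
  shows "f2 = (dapp f2 v1 / dapp f1 v1) *s f1"
proof -
  have "f2$i = (dapp f2 v1 / dapp f1 v1) * f1$i" for i
  proof -
    define x where "x = basis4 i - (f1$i / dapp f1 v1) *s v1"
    have "dapp f1 x = 0"
      using assms(1) by (simp add: x_def dapp_diff_right dapp_scale_right dapp_basis4)
    then have "dapp f2 x = 0"
      by (rule assms(2))
    then show ?thesis
      using assms(1) by (simp add: x_def dapp_diff_right dapp_scale_right dapp_basis4 field_simps)
  qed
  then show ?thesis
    by (simp add: vec_eq_iff)
qed

lemma same_nbhd_swap: "same_nbhd (prod.swap x) (prod.swap y) \<longleftrightarrow> same_nbhd x y"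
proof -
  have "perp (prod.swap x) z \<longleftrightarrow> perp x (prod.swap z)"
    and "is_vertex (prod.swap z) \<longleftrightarrow> is_vertex z" for x z :: "('a ^ 4) \<times> ('a ^ 4)"
    by (simp_all add: perp_def is_vertex_def dapp_commute conj_commute)
  then show ?thesis
    unfolding same_nbhd_def by (metis swap_swap)
qed

lemma same_nbhd_kernel_subset:
  assumes "is_vertex (v1, f1)" and "same_nbhd (v1, f1) (v2, f2)" and "dapp f1 y = 0"
  shows "dapp f2 y = 0"
proof (cases "y = 0")
  case False
  then obtain g where "dapp g v1 = 0" and "dapp g y \<noteq> 0"
    using exists_dapp_separating assms(1,3) by (metis is_vertex_def fst_conv snd_conv)
  then have "is_vertex (y, g)" and "perp (v1, f1) (y, g)"
    using assms(3) by (simp_all add: is_vertex_def perp_def)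
  then have "perp (v2, f2) (y, g)"
    using assms(2) by (simp add: same_nbhd_def)
  then show ?thesis
    by (simp add: perp_def)
qed simp

lemma same_nbhd_proportional:
  assumes "is_vertex (v1, f1)" and "same_nbhd (v1, f1) (v2, f2)"
  shows "\<exists>a b. v2 = a *s v1 \<and> f2 = b *s f1"
proof -
  have swapped: "is_vertex (f1, v1)" "same_nbhd (f1, v1) (f2, v2)"
    using assms same_nbhd_swap[of "(v1, f1)" "(v2, f2)"]
    by (simp_all add: is_vertex_def dapp_commute)
  have "v2 = (dapp v2 f1 / dapp v1 f1) *s v1"
    using swapped(1) same_nbhd_kernel_subset[OF swapped]
    unfolding is_vertex_def fst_conv snd_conv by (rule kernel_subset_imp_proportional)
  moreover have "f2 = (dapp f2 v1 / dapp f1 v1) *s f1"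
    using assms(1) same_nbhd_kernel_subset[OF assms]
    unfolding is_vertex_def fst_conv snd_conv by (rule kernel_subset_imp_proportional)
  ultimately show ?thesis
    by blast
qed

lemma all_4_from_0: "(\<forall>i::4. P i) \<longleftrightarrow> P 0 \<and> P 1 \<and> P 2 \<and> P 3"
proof -
  have "i = 0 \<or> i = 1 \<or> i = 2 \<or> i = 3" for i :: 4
    using exhaust_4[of i] by auto
  then show ?thesis
    by metis
qed

lemma psi_values:
  "psi c w (0,0) = 0" "psi c w (0,1) = c * w (2,3)" "psi c w (0,2) = - c * w (1,3)" "psi c w (0,3) = c * w (1,2)"
  "psi c w (1,0) = - c * w (2,3)" "psi c w (1,1) = 0" "psi c w (1,2) = c * w (0,3)" "psi c w (1,3) = - c * w (0,2)"
  "psi c w (2,0) = c * w (1,3)" "psi c w (2,1) = - c * w (0,3)" "psi c w (2,2) = 0" "psi c w (2,3) = c * w (0,1)"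
  "psi c w (3,0) = - c * w (1,2)" "psi c w (3,1) = c * w (0,2)" "psi c w (3,2) = - c * w (0,1)" "psi c w (3,3) = 0"
  by (simp_all add: psi_def wedge4_def wedge2_def basis4_def)

lemma alt2_psi: "alt2 (psi c w)"
  unfolding alt2_def all_4_from_0 by (simp add: psi_values)

lemma psi_psi:
  assumes "alt2 w"
  shows "psi c (psi d w) = (\<lambda>p. c * d * w p)"
proof -
  have antisym: "w (j, i) = - w (i, j)" and diag: "w (i, i) = 0" for i j
    using assms unfolding alt2_def by (metis minus_minus)+
  have lower: "w (1,0) = - w (0,1)" "w (2,0) = - w (0,2)" "w (3,0) = - w (0,3)"
    "w (2,1) = - w (1,2)" "w (3,1) = - w (1,3)" "w (3,2) = - w (2,3)"
    by (rule antisym)+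
  have "\<forall>i j. psi c (psi d w) (i,j) = c * d * w (i,j)"
    unfolding all_4_from_0 by (simp only: psi_values) (simp add: diag lower)
  then show ?thesis
    by (auto simp: fun_eq_iff)
qed

lemma phi_eq_psi_inverse:
  assumes "c \<noteq> 0" and "alt2 \<alpha>"
  shows "phi c \<alpha> = psi (inverse c) \<alpha>"
  unfolding phi_def
proof (rule the_equality)
  show "alt2 (psi (inverse c) \<alpha>) \<and> psi c (psi (inverse c) \<alpha>) = \<alpha>"
    using psi_psi[OF assms(2)] assms(1) by (simp add: alt2_psi)
next
  fix w
  assume "alt2 w \<and> psi c w = \<alpha>"
  then show "w = psi (inverse c) \<alpha>"
    using psi_psi[of w "inverse c" c] assms(1) by auto
qed

lemma alt2_wedge2: "alt2 (wedge2 x y)"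
  by (auto simp: alt2_def wedge2_def)

lemma wedge2_scale_right: "wedge2 x (a *s y) = (\<lambda>p. a * wedge2 x y p)"
  by (auto simp: wedge2_def fun_eq_iff algebra_simps)

lemma psi_scale: "psi c (\<lambda>p. b * w p) = (\<lambda>p. b * psi c w p)"
  by (auto simp: psi_def wedge4_def algebra_simps fun_eq_iff)

lemma phi_wedge2_scale_right:
  assumes "c \<noteq> 0"
  shows "phi c (wedge2 x (b *s y)) = (\<lambda>p. b * phi c (wedge2 x y) p)"
proof -
  have "phi c (wedge2 x (b *s y)) = psi (inverse c) (wedge2 x (b *s y))"
    by (rule phi_eq_psi_inverse[OF assms alt2_wedge2])
  also have "\<dots> = (\<lambda>p. b * psi (inverse c) (wedge2 x y) p)"
    by (simp add: wedge2_scale_right psi_scale)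
  also have "\<dots> = (\<lambda>p. b * phi c (wedge2 x y) p)"
    by (simp add: phi_eq_psi_inverse[OF assms alt2_wedge2])
  finally show ?thesis .
qed

lemma sprod_scale: "sprod (\<lambda>p. a * x p) (\<lambda>p. b * y p) r = a * b * sprod x y r"
  by (cases r) (auto simp: sprod_def algebra_simps)

lemma voltage_scale_target:
  assumes "c \<noteq> 0" and "a \<noteq> 0" and "b \<noteq> 0"
  shows "voltage c x (a *s v, b *s f) = voltage c x (v, f)"
proof
  fix r
  have "dapp (b *s f) (a *s v) = a * b * dapp f v"
    by (simp add: dapp_scale_left dapp_scale_right)
  then show "voltage c x (a *s v, b *s f) r = voltage c x (v, f) r"
    unfolding voltage_def fst_conv snd_conv phi_wedge2_scale_right[OF assms(1)]
    unfolding wedge2_scale_right sprod_scale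
    using assms by (simp add: field_simps)
qed

theorem lemma3p7:
  fixes c :: "'a::field"
    and u v w :: "('a ^ 4) \<times> ('a ^ 4)"
  assumes "CHAR('a) = 2"
    and "c \<noteq> 0"
    and "is_vertex u" and "is_vertex v" and "is_vertex w"
    and "same_nbhd u v"
    and "perp v w"
  shows "voltage c w u = voltage c w v"
proof -
  obtain v1 f1 v2 f2 where u: "u = (v1, f1)" and v: "v = (v2, f2)"
    by fastforce
  then obtain a b where v2: "v2 = a *s v1" and f2: "f2 = b *s f1"
    using same_nbhd_proportional assms(3,6) by blast
  have "a * b * dapp f1 v1 \<noteq> 0"
    using assms(4) by (simp add: v v2 f2 is_vertex_def dapp_scale_left dapp_scale_right)
  then have "a \<noteq> 0" and "b \<noteq> 0"
    by auto
  with assms(2) have "voltage c w (a *s v1, b *s f1) = voltage c w (v1, f1)"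
    by (rule voltage_scale_target)
  then show ?thesis
    unfolding u v v2 f2 by (rule sym)
qed

end
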